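(* Let $A$ be a physical system of dimension $m$ whose Hamiltonian $H^A=\sum_{x=1}^m a_x|x\rangle\langle x|$ has a non-degenerate Bohr spectrum, and let $\mathcal{E}:A\to A$ be a quantum channel. Then $\mathcal{E}$ is time-translation covariant if and only if there exist a conditional probability distribution $\{p_{y|x}\}_{x,y\in[m]}$ (i.e. $p_{y|x}\ge0$ and $\sum_y p_{y|x}=1$ for every $x$) and an $m\times m$ positive semidefinite matrix $Q=(q_{xy})$ with diagonal entries $q_{xx}=p_{x|x}$ for all $x\in[m]$, such that the Choi matrix of $\mathcal{E}$ is $$J_\mathcal{E}^{A\tilde A}=\sum_{x,y\in[m]}p_{y|x}|x\rangle\langle x|^A\otimes|y\rangle\langle y|^{\tilde A}+\sum_{x\neq y,\ x,y\in[m]}q_{xy}|x\rangle\langle y|^A\otimes|x\rangle\langle y|^{\tilde A}.$$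
   Context: $H^A$ has a non-degenerate Bohr spectrum if for all $x,y,x',y'\in[m]$: $a_x-a_y=a_{x'}-a_{y'}$ holds iff ($x=x'$ and $y=y'$) or ($x=y$ and $x'=y'$). A channel $\mathcal{E}:A\to A$ is time-translation covariant if $\mathcal{E}(e^{-iH^At}\rho e^{iH^At})=e^{-iH^At}\mathcal{E}(\rho)e^{iH^At}$ for all $t\in\mathbb{R}$ and all states $\rho$. The Choi matrix of $\mathcal{E}$ is $J_\mathcal{E}^{A\tilde A}=\sum_{x,x'\in[m]}|x\rangle\langle x'|^A\otimes\mathcal{E}(|x\rangle\langle x'|)^{\tilde A}$, where $\tilde A$ is a copy of $A$. *)

theory Defs
  imports Complex_Main "HOL-Library.Function_Algebras"
begin

text \<open>Operators on a finite-dimensional Hilbert space with orthonormal basis indexed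
by a finite type 'i are represented as matrices  'i \<Rightarrow> 'i \<Rightarrow> complex.\<close>

type_synonym 'i op = "'i \<Rightarrow> 'i \<Rightarrow> complex"

definition mmult :: "'i::finite op \<Rightarrow> 'i op \<Rightarrow> 'i op" where
  "mmult A B = (\<lambda>x y. \<Sum>z\<in>UNIV. A x z * B z y)"

definition adjoint :: "'i op \<Rightarrow> 'i op" where
  "adjoint A = (\<lambda>x y. cnj (A y x))"

definition smult_op :: "complex \<Rightarrow> 'i op \<Rightarrow> 'i op" where
  "smult_op c A = (\<lambda>x y. c * A x y)"

definition trace_op :: "'i::finite op \<Rightarrow> complex" where
  "trace_op A = (\<Sum>x\<in>UNIV. A x x)"

definition ketbra :: "'i \<Rightarrow> 'i \<Rightarrow> 'i op" where
  "ketbra x y = (\<lambda>a b. if a = x \<and> b = y then 1 else 0)"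

definition kron :: "'i op \<Rightarrow> 'j op \<Rightarrow> ('i \<times> 'j) op" where
  "kron A B = (\<lambda>(a, b) (a', b'). A a a' * B b b')"

text \<open>Positive semidefiniteness of the principal block on index set S
  (over complex scalars this includes Hermiticity).\<close>
definition psd_on :: "'i set \<Rightarrow> 'i op \<Rightarrow> bool" where
  "psd_on S M \<longleftrightarrow> (\<forall>v :: 'i \<Rightarrow> complex.
      let q = (\<Sum>i\<in>S. \<Sum>j\<in>S. cnj (v i) * M i j * v j) in Im q = 0 \<and> Re q \<ge> 0)"

definition psd :: "'i::finite op \<Rightarrow> bool" where
  "psd M \<longleftrightarrow> psd_on UNIV M"

definition density_op :: "'i::finite op \<Rightarrow> bool" where
  "density_op \<rho> \<longleftrightarrow> psd \<rho> \<and> trace_op \<rho> = 1"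

definition linear_superop :: "('i op \<Rightarrow> 'j op) \<Rightarrow> bool" where
  "linear_superop E \<longleftrightarrow> (\<forall>X Y. E (X + Y) = E X + E Y) \<and> (\<forall>c X. E (smult_op c X) = smult_op c (E X))"

text \<open>id_k \<otimes> E acting on operators on C^k \<otimes> H (ancilla indices nat, restricted to {..<k}).\<close>
definition id_tensor :: "('i op \<Rightarrow> 'j op) \<Rightarrow> (nat \<times> 'i) op \<Rightarrow> (nat \<times> 'j) op" where
  "id_tensor E X = (\<lambda>(r, a) (s, b). E (\<lambda>a' b'. X (r, a') (s, b')) a b)"

definition completely_positive :: "('i::finite op \<Rightarrow> 'j::finite op) \<Rightarrow> bool" where
  "completely_positive E \<longleftrightarrow> (\<forall>k X. psd_on ({..<k} \<times> UNIV) X \<longrightarrow> psd_on ({..<k} \<times> UNIV) (id_tensor E X))"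

definition trace_preserving :: "('i::finite op \<Rightarrow> 'j::finite op) \<Rightarrow> bool" where
  "trace_preserving E \<longleftrightarrow> (\<forall>X. trace_op (E X) = trace_op X)"

definition quantum_channel :: "('i::finite op \<Rightarrow> 'j::finite op) \<Rightarrow> bool" where
  "quantum_channel E \<longleftrightarrow> linear_superop E \<and> completely_positive E \<and> trace_preserving E"

definition hamiltonian :: "('i \<Rightarrow> real) \<Rightarrow> 'i op" where
  "hamiltonian a = (\<lambda>x y. if x = y then complex_of_real (a x) else 0)"

definition evol :: "('i \<Rightarrow> real) \<Rightarrow> real \<Rightarrow> 'i op" where
  "evol a t = (\<lambda>x y. if x = y then exp (- \<i> * complex_of_real (a x * t)) else 0)"

definition nondegenerate_bohr :: "('i \<Rightarrow> real) \<Rightarrow> bool" where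
  "nondegenerate_bohr a \<longleftrightarrow> (\<forall>x y x' y'. a x - a y = a x' - a y' \<longleftrightarrow>
       (x = x' \<and> y = y') \<or> (x = y \<and> x' = y'))"

definition time_translation_covariant :: "('i::finite \<Rightarrow> real) \<Rightarrow> ('i op \<Rightarrow> 'i op) \<Rightarrow> bool" where
  "time_translation_covariant a E \<longleftrightarrow> (\<forall>t \<rho>. density_op \<rho> \<longrightarrow>
     E (mmult (mmult (evol a t) \<rho>) (adjoint (evol a t)))
       = mmult (mmult (evol a t) (E \<rho>)) (adjoint (evol a t)))"

definition choi :: "('i::finite op \<Rightarrow> 'i op) \<Rightarrow> ('i \<times> 'i) op" where
  "choi E = (\<Sum>x\<in>UNIV. \<Sum>x'\<in>UNIV. kron (ketbra x x') (E (ketbra x x')))"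

end

theory Submission
  imports Defs
begin

(* Conjugation by e^{-iHt} multiplies the (u,v) entry of an operator by e^{i(a_v - a_u)t}.
   Density operators span all matrices, so a linear E is covariant iff the (u,v) entry of
   E(|x><y|) vanishes whenever a_y - a_x differs from a_v - a_u.  For a non-degenerate Bohr
   spectrum this leaves only the entries with (u,v) = (x,y), or x = y and u = v, which is the
   shape of the displayed Choi matrix.  The coefficients are read off the Choi matrix:
   complete positivity makes it, hence its principal blocks E(|x><x|) and (E(|x><y|)_{xy}),
   positive semidefinite, and trace preservation normalises p. *)

lemma sum_fun_apply: "sum f A x = (\<Sum>i\<in>A. f i x)"
  by (induction A rule: infinite_finite_induct) auto

lemma sum_sum_delta:
  fixes f :: "'a::finite \<Rightarrow> 'b::finite \<Rightarrow> 'c::comm_monoid_add"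
  shows "(\<Sum>x\<in>UNIV. \<Sum>y\<in>UNIV. if a = x \<and> b = y then f x y else 0) = f a b"
proof -
  have "(\<Sum>y\<in>UNIV. if a = x \<and> b = y then f x y else 0) = (if a = x then f x b else 0)" for x
    by (simp add: sum.delta')
  then show ?thesis by (simp add: sum.delta')
qed

lemma ketbra_times:
  "ketbra x y a b * z = (if a = x \<and> b = y then z else 0)"
  "z * ketbra x y a b = (if a = x \<and> b = y then z else 0)"
  by (simp_all add: ketbra_def)

lemma kron_ketbra: "kron (ketbra x y) (ketbra x' y') = ketbra (x, x') (y, y')"
  by (auto simp: fun_eq_iff kron_def ketbra_def)

lemma smult_ketbra_apply: "smult_op c (ketbra x y) a b = (if a = x \<and> b = y then c else 0)"
  by (simp add: smult_op_def ketbra_def)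

lemma choi_apply: "choi E (a, b) (a', b') = E (ketbra a a') b b'"
  unfolding choi_def by (simp add: sum_fun_apply kron_def ketbra_times sum_sum_delta)

lemma choi_eq_covariant_form_iff:
  fixes p :: "'n::finite \<Rightarrow> 'n \<Rightarrow> real" and Q :: "'n op"
  shows "choi E = (\<Sum>x\<in>UNIV. \<Sum>y\<in>UNIV.
                   smult_op (complex_of_real (p x y)) (kron (ketbra x x) (ketbra y y)))
              + (\<Sum>x\<in>UNIV. \<Sum>y\<in>UNIV - {x}.
                   smult_op (Q x y) (kron (ketbra x y) (ketbra x y)))
    \<longleftrightarrow> (\<forall>x y u v. E (ketbra x y) u v =
          (if x = y then if u = v then complex_of_real (p x u) else 0
           else if u = x \<and> v = y then Q x y else 0))"
proof -
  have diag: "(\<Sum>x'\<in>UNIV. \<Sum>y'\<in>UNIV. smult_op (complex_of_real (p x' y'))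
                 (kron (ketbra x' x') (ketbra y' y'))) (x, u) (y, v)
      = (if x = y \<and> u = v then complex_of_real (p x u) else 0)" for x y u v
  proof -
    have "(\<Sum>x'\<in>UNIV. \<Sum>y'\<in>UNIV. smult_op (complex_of_real (p x' y'))
                 (kron (ketbra x' x') (ketbra y' y'))) (x, u) (y, v)
        = (\<Sum>x'\<in>UNIV. \<Sum>y'\<in>UNIV. if x = x' \<and> u = y' then
             (if x = y \<and> u = v then complex_of_real (p x' y') else 0) else 0)"
      by (auto simp: sum_fun_apply kron_ketbra smult_ketbra_apply intro!: sum.cong)
    then show ?thesis by (simp only: sum_sum_delta)
  qed
  have offdiag: "(\<Sum>x'\<in>UNIV. \<Sum>y'\<in>UNIV - {x'}. smult_op (Q x' y')
                 (kron (ketbra x' y') (ketbra x' y'))) (x, u) (y, v)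
      = (if x \<noteq> y \<and> u = x \<and> v = y then Q x y else 0)" for x y u v
  proof -
    have "(\<Sum>y'\<in>UNIV - {x'}. smult_op (Q x' y') (kron (ketbra x' y') (ketbra x' y')) (x, u) (y, v))
        = (if x' = x then if x \<noteq> y \<and> u = x \<and> v = y then Q x y else 0 else 0)" for x'
    proof -
      have "(\<Sum>y'\<in>UNIV - {x'}. smult_op (Q x' y') (kron (ketbra x' y') (ketbra x' y')) (x, u) (y, v))
          = (\<Sum>y'\<in>UNIV - {x'}. if y = y' then if x = x' \<and> u = x' \<and> v = y then Q x' y' else 0 else 0)"
        by (intro sum.cong) (auto simp: kron_ketbra smult_ketbra_apply)
      then show ?thesis by (auto simp: sum.delta)
    qed
    then show ?thesis by (simp add: sum_fun_apply)
  qed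
  show ?thesis
    by (auto simp: fun_eq_iff choi_apply diag offdiag)
qed

lemma linear_superop_zero: "linear_superop E \<Longrightarrow> E 0 = 0"
  unfolding linear_superop_def by (metis add_cancel_right_right)

lemma linear_superop_sum:
  assumes "linear_superop E"
  shows "E (sum f A) = (\<Sum>i\<in>A. E (f i))"
proof (induction A rule: infinite_finite_induct)
  case (insert x F)
  then show ?case using assms unfolding linear_superop_def by (metis sum.insert)
qed (use linear_superop_zero[OF assms] in \<open>simp_all add: zero_fun_def\<close>)

lemma linear_superop_sum_smult:
  assumes "linear_superop F"
  shows "F (\<Sum>x\<in>A. \<Sum>y\<in>B. smult_op (c x y) (X x y))
    = (\<Sum>x\<in>A. \<Sum>y\<in>B. smult_op (c x y) (F (X x y)))"
  using assms by (simp add: linear_superop_sum linear_superop_def)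

lemma op_eq_sum_ketbra: "(X :: 'n::finite op) = (\<Sum>x\<in>UNIV. \<Sum>y\<in>UNIV. smult_op (X x y) (ketbra x y))"
  by (simp add: fun_eq_iff sum_fun_apply smult_ketbra_apply sum_sum_delta)

lemma linear_superop_expand:
  assumes "linear_superop E"
  shows "E (X :: 'n::finite op) = (\<Sum>x\<in>UNIV. \<Sum>y\<in>UNIV. smult_op (X x y) (E (ketbra x y)))"
  by (subst op_eq_sum_ketbra) (rule linear_superop_sum_smult[OF assms])

lemma linear_superop_apply:
  assumes "linear_superop E"
  shows "E (X :: 'n::finite op) u v = (\<Sum>x\<in>UNIV. \<Sum>y\<in>UNIV. X x y * E (ketbra x y) u v)"
  by (subst linear_superop_expand[OF assms]) (simp add: sum_fun_apply smult_op_def)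

definition outer :: "('i \<Rightarrow> complex) \<Rightarrow> 'i op" where
  "outer w = (\<lambda>i j. w i * cnj (w j))"

definition ket :: "'i \<Rightarrow> 'i \<Rightarrow> complex" where
  "ket x = (\<lambda>i. if i = x then 1 else 0)"

lemma psd_on_outer: "psd_on S (outer w)"
  unfolding psd_on_def Let_def
proof
  fix v :: "'a \<Rightarrow> complex"
  let ?s = "\<Sum>i\<in>S. cnj (v i) * w i"
  have "?s * cnj ?s = (\<Sum>i\<in>S. \<Sum>j\<in>S. (cnj (v i) * w i) * (v j * cnj (w j)))"
    by (simp add: sum_product)
  then have "(\<Sum>i\<in>S. \<Sum>j\<in>S. cnj (v i) * outer w i j * v j) = ?s * cnj ?s"
    by (simp add: outer_def mult_ac)
  also have "\<dots> = complex_of_real ((cmod ?s)\<^sup>2)"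
    by (rule complex_norm_square[symmetric])
  finally show "Im (\<Sum>i\<in>S. \<Sum>j\<in>S. cnj (v i) * outer w i j * v j) = 0 \<and>
      0 \<le> Re (\<Sum>i\<in>S. \<Sum>j\<in>S. cnj (v i) * outer w i j * v j)"
    by simp
qed

lemma psd_on_smult:
  assumes "psd_on S M" "c \<ge> 0"
  shows "psd_on S (smult_op (complex_of_real c) M)"
  unfolding psd_on_def Let_def
proof
  fix v :: "'a \<Rightarrow> complex"
  let ?q = "\<Sum>i\<in>S. \<Sum>j\<in>S. cnj (v i) * M i j * v j"
  have "Im ?q = 0 \<and> Re ?q \<ge> 0"
    using assms(1) unfolding psd_on_def Let_def by blast
  moreover have "(\<Sum>i\<in>S. \<Sum>j\<in>S. cnj (v i) * smult_op (complex_of_real c) M i j * v j)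
      = complex_of_real c * ?q"
    by (simp add: smult_op_def sum_distrib_left mult_ac)
  ultimately show "Im (\<Sum>i\<in>S. \<Sum>j\<in>S. cnj (v i) * smult_op (complex_of_real c) M i j * v j) = 0 \<and>
      0 \<le> Re (\<Sum>i\<in>S. \<Sum>j\<in>S. cnj (v i) * smult_op (complex_of_real c) M i j * v j)"
    using assms(2) by simp
qed

lemma psd_diag:
  assumes "psd (M :: 'n::finite op)"
  shows "Im (M y y) = 0 \<and> 0 \<le> Re (M y y)"
proof -
  have "(\<Sum>i\<in>UNIV. \<Sum>j\<in>UNIV. cnj (ket y i) * M i j * ket y j)
      = (\<Sum>i\<in>UNIV. \<Sum>j\<in>UNIV. if y = i \<and> y = j then M i j else 0)"
    by (intro sum.cong refl) (simp add: ket_def)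
  also have "\<dots> = M y y"
    by (rule sum_sum_delta)
  finally have "(\<Sum>i\<in>UNIV. \<Sum>j\<in>UNIV. cnj (ket y i) * M i j * ket y j) = M y y" .
  moreover have "Im (\<Sum>i\<in>UNIV. \<Sum>j\<in>UNIV. cnj (ket y i) * M i j * ket y j) = 0 \<and>
      0 \<le> Re (\<Sum>i\<in>UNIV. \<Sum>j\<in>UNIV. cnj (ket y i) * M i j * ket y j)"
    using assms unfolding psd_def psd_on_def Let_def by blast
  ultimately show ?thesis by simp
qed

lemma psd_on_reindex:
  fixes \<phi> :: "'a::finite \<Rightarrow> 'b"
  assumes "psd_on S M" "finite S" "inj \<phi>" "range \<phi> \<subseteq> S"
  shows "psd (\<lambda>x y. M (\<phi> x) (\<phi> y))"
  unfolding psd_def psd_on_def Let_def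
proof
  fix v :: "'a \<Rightarrow> complex"
  define V where "V i = (if i \<in> range \<phi> then v (inv \<phi> i) else 0)" for i
  let ?f = "\<lambda>i j. cnj (V i) * M i j * V j"
  have "(\<Sum>i\<in>S. \<Sum>j\<in>S. ?f i j) = (\<Sum>i\<in>range \<phi>. \<Sum>j\<in>range \<phi>. ?f i j)"
    using assms(2,4)
    by (intro sum.mono_neutral_cong_right ballI) (auto simp: V_def intro!: sum.neutral)
  also have "\<dots> = (\<Sum>x\<in>UNIV. \<Sum>y\<in>UNIV. cnj (v x) * M (\<phi> x) (\<phi> y) * v y)"
    using assms(3) by (simp add: sum.reindex V_def)
  finally show "Im (\<Sum>x\<in>UNIV. \<Sum>y\<in>UNIV. cnj (v x) * M (\<phi> x) (\<phi> y) * v y) = 0 \<and>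
      0 \<le> Re (\<Sum>x\<in>UNIV. \<Sum>y\<in>UNIV. cnj (v x) * M (\<phi> x) (\<phi> y) * v y)"
    using assms(1) unfolding psd_on_def Let_def by metis
qed

lemma completely_positive_imp_psd_choi:
  fixes E :: "'n::finite op \<Rightarrow> 'n op"
  assumes "completely_positive E"
  shows "psd (choi E)"
proof -
  obtain h :: "'n \<Rightarrow> nat" and k where h: "bij_betw h UNIV {..<k}"
    using ex_bij_betw_finite_nat[of "UNIV :: 'n set"] by (auto simp: atLeast0LessThan)
  \<comment> \<open>w is the unnormalised maximally entangled vector; id \<otimes> E maps its projector to the Choi matrix\<close>
  define w :: "nat \<times> 'n \<Rightarrow> complex" where "w = (\<lambda>(r, a). if r = h a then 1 else 0)"
  have "psd_on ({..<k} \<times> UNIV) (id_tensor E (outer w))"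
    using assms psd_on_outer unfolding completely_positive_def by blast
  then have "psd (\<lambda>i j. id_tensor E (outer w) (map_prod h id i) (map_prod h id j))"
    by (rule psd_on_reindex) (use bij_betw_imp_inj_on[OF h] bij_betw_apply[OF h] in \<open>auto simp: inj_on_def\<close>)
  moreover have "id_tensor E (outer w) (h x, u) (h y, v) = choi E (x, u) (y, v)" for x y u v
  proof -
    have "(\<lambda>a b. outer w (h x, a) (h y, b)) = ketbra x y"
      using bij_betw_imp_inj_on[OF h] by (auto simp: fun_eq_iff outer_def w_def ketbra_def inj_eq)
    then show ?thesis
      by (simp add: id_tensor_def choi_apply)
  qed
  ultimately show ?thesis
    by (simp add: map_prod_def split_beta)
qed

lemma outer_ket: "outer (ket x) = ketbra x x"
  by (auto simp: fun_eq_iff outer_def ket_def ketbra_def)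

lemma density_op_ketbra: "density_op (ketbra (x :: 'n::finite) x)"
proof -
  have "psd (ketbra x x)"
    unfolding psd_def outer_ket[symmetric] by (rule psd_on_outer)
  then show ?thesis
    by (simp add: density_op_def trace_op_def ketbra_def)
qed

lemma density_op_superposition:
  fixes x y :: "'n::finite"
  assumes "x \<noteq> y" "cmod c = 1"
  shows "density_op (smult_op (complex_of_real (1/2)) (outer (\<lambda>i. ket x i + c * ket y i)))"
  unfolding density_op_def
proof
  show "psd (smult_op (complex_of_real (1/2)) (outer (\<lambda>i. ket x i + c * ket y i)))"
    unfolding psd_def by (rule psd_on_smult[OF psd_on_outer]) simp
  have "c * cnj c = 1"
    using assms(2) by (simp add: complex_norm_square[symmetric])
  then have "outer (\<lambda>i. ket x i + c * ket y i) i i = ket x i + ket y i" for i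
    using assms(1) by (simp add: outer_def ket_def)
  then have "trace_op (smult_op (complex_of_real (1/2)) (outer (\<lambda>i. ket x i + c * ket y i)))
      = 1/2 * (\<Sum>i\<in>UNIV. ket x i + ket y i)"
    by (simp add: trace_op_def smult_op_def sum_distrib_left)
  also have "\<dots> = 1"
    by (simp add: sum.distrib ket_def)
  finally show "trace_op (smult_op (complex_of_real (1/2)) (outer (\<lambda>i. ket x i + c * ket y i))) = 1" .
qed

lemma ketbra_polarization:
  assumes "x \<noteq> y"
  shows "ketbra x y = smult_op (complex_of_real (1/2)) (outer (\<lambda>i. ket x i + 1 * ket y i))
     + smult_op \<i> (smult_op (complex_of_real (1/2)) (outer (\<lambda>i. ket x i + \<i> * ket y i)))
     + smult_op (- (1 + \<i>) / 2) (ketbra x x + ketbra y y)"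
  using assms by (auto simp: fun_eq_iff ketbra_def smult_op_def outer_def ket_def field_simps)

lemma commute_on_density_ops_imp_commute:
  fixes E T :: "'n::finite op \<Rightarrow> 'n op"
  assumes E: "linear_superop E" and T: "linear_superop T"
    and commute: "\<And>\<rho>. density_op \<rho> \<Longrightarrow> E (T \<rho>) = T (E \<rho>)"
  shows "E (T X) = T (E X)"
proof -
  define C where "C = {X. E (T X) = T (E X)}"
  have C_add: "X + Y \<in> C" if "X \<in> C" "Y \<in> C" for X Y
    using that E T by (simp add: C_def linear_superop_def)
  have C_smult: "smult_op c X \<in> C" if "X \<in> C" for c X
    using that E T by (simp add: C_def linear_superop_def)
  have C_density: "\<rho> \<in> C" if "density_op \<rho>" for \<rho>
    using that commute by (simp add: C_def)
  have ketbra: "ketbra x y \<in> C" for x y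
  proof (cases "x = y")
    case True
    then show ?thesis by (simp add: C_density density_op_ketbra)
  next
    case False
    then show ?thesis
      by (subst ketbra_polarization[OF False])
        (intro C_add C_smult C_density density_op_superposition density_op_ketbra; simp)
  qed
  have "E (T X) = (\<Sum>x\<in>UNIV. \<Sum>y\<in>UNIV. smult_op (X x y) (E (T (ketbra x y))))"
    by (simp only: linear_superop_expand[OF T, of X] linear_superop_sum_smult[OF E])
  also have "\<dots> = (\<Sum>x\<in>UNIV. \<Sum>y\<in>UNIV. smult_op (X x y) (T (E (ketbra x y))))"
    using ketbra by (simp add: C_def)
  also have "\<dots> = T (E X)"
    by (simp only: linear_superop_expand[OF E, of X] linear_superop_sum_smult[OF T])
  finally show ?thesis .
qed

definition time_evolve :: "('i \<Rightarrow> real) \<Rightarrow> real \<Rightarrow> 'i op \<Rightarrow> 'i op" where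
  "time_evolve a t X = (\<lambda>u v. cis ((a v - a u) * t) * X u v)"

lemma evol_conjugate_eq_time_evolve:
  "mmult (mmult (evol a t) X) (adjoint (evol a t)) = time_evolve a t (X :: 'n::finite op)"
proof -
  have evol: "evol a t u v = (if u = v then cis (- (a u * t)) else 0)" for u v
    by (simp add: evol_def cis_conv_exp)
  show ?thesis
    by (simp add: fun_eq_iff mmult_def adjoint_def time_evolve_def evol if_distrib[of "\<lambda>c. c * _"]
        if_distrib[of "\<lambda>c. _ * c"] if_distrib[of cnj] sum.delta cis_cnj cis_mult algebra_simps cong: if_cong)
qed

lemma linear_superop_time_evolve: "linear_superop (time_evolve a t)"
  by (simp add: linear_superop_def time_evolve_def smult_op_def fun_eq_iff algebra_simps)

lemma time_evolve_ketbra: "time_evolve a t (ketbra x y) = smult_op (cis ((a y - a x) * t)) (ketbra x y)"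
  by (auto simp: fun_eq_iff time_evolve_def smult_op_def ketbra_def)

lemma cis_antiphase_exists:
  assumes "d \<noteq> e"
  shows "\<exists>t. cis (d * t) = - cis (e * t)"
proof
  define t where "t = pi / (d - e)"
  have "d * t = e * t + pi"
    using assms by (simp add: t_def field_simps)
  then have "cis (d * t) = cis (e * t) * cis pi"
    by (simp only: cis_mult)
  then show "cis (d * t) = - cis (e * t)"
    by simp
qed

lemma commute_time_evolve_iff_selection_rule:
  fixes E :: "'n::finite op \<Rightarrow> 'n op"
  assumes lin: "linear_superop E"
  shows "(\<forall>t X. E (time_evolve a t X) = time_evolve a t (E X))
    \<longleftrightarrow> (\<forall>x y u v. a y - a x \<noteq> a v - a u \<longrightarrow> E (ketbra x y) u v = 0)"
proof safe
  fix x y u v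
  assume commute: "\<forall>t X. E (time_evolve a t X) = time_evolve a t (E X)"
    and ne: "a y - a x \<noteq> a v - a u"
  obtain t where t: "cis ((a y - a x) * t) = - cis ((a v - a u) * t)"
    using cis_antiphase_exists[OF ne] by blast
  have "E (time_evolve a t (ketbra x y)) = time_evolve a t (E (ketbra x y))"
    using commute by blast
  then have "smult_op (cis ((a y - a x) * t)) (E (ketbra x y)) = time_evolve a t (E (ketbra x y))"
    using lin by (simp add: time_evolve_ketbra linear_superop_def)
  from fun_cong[OF fun_cong[OF this, of u], of v]
  have "cis ((a y - a x) * t) * E (ketbra x y) u v = cis ((a v - a u) * t) * E (ketbra x y) u v"
    by (simp add: smult_op_def time_evolve_def)
  then show "E (ketbra x y) u v = 0"
    unfolding t by (simp add: cis_neq_zero)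
next
  fix t X
  assume sel: "\<forall>x y u v. a y - a x \<noteq> a v - a u \<longrightarrow> E (ketbra x y) u v = 0"
  have "E (time_evolve a t X) u v = time_evolve a t (E X) u v" for u v
  proof -
    have phase: "cis ((a y - a x) * t) * E (ketbra x y) u v = cis ((a v - a u) * t) * E (ketbra x y) u v"
      for x y
      using sel by (cases "a y - a x = a v - a u") auto
    have "E (time_evolve a t X) u v
        = (\<Sum>x\<in>UNIV. \<Sum>y\<in>UNIV. X x y * (cis ((a y - a x) * t) * E (ketbra x y) u v))"
      by (subst linear_superop_apply[OF lin]) (simp add: time_evolve_def mult_ac)
    also have "\<dots> = (\<Sum>x\<in>UNIV. \<Sum>y\<in>UNIV. X x y * (cis ((a v - a u) * t) * E (ketbra x y) u v))"
      by (simp only: phase)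
    also have "\<dots> = time_evolve a t (E X) u v"
      by (simp add: linear_superop_apply[OF lin, of X] time_evolve_def sum_distrib_left mult_ac)
    finally show ?thesis .
  qed
  then show "E (time_evolve a t X) = time_evolve a t (E X)"
    by blast
qed

lemma time_translation_covariant_iff_selection_rule:
  fixes E :: "'n::finite op \<Rightarrow> 'n op"
  assumes lin: "linear_superop E"
  shows "time_translation_covariant a E
    \<longleftrightarrow> (\<forall>x y u v. a y - a x \<noteq> a v - a u \<longrightarrow> E (ketbra x y) u v = 0)"
proof -
  have "time_translation_covariant a E \<longleftrightarrow> (\<forall>t X. E (time_evolve a t X) = time_evolve a t (E X))"
    unfolding time_translation_covariant_def evol_conjugate_eq_time_evolve
    using commute_on_density_ops_imp_commute[OF lin linear_superop_time_evolve] by blast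
  then show ?thesis
    using commute_time_evolve_iff_selection_rule[OF lin] by blast
qed

lemma quantum_channel_support_iff_coefficients:
  fixes E :: "'n::finite op \<Rightarrow> 'n op"
  assumes "quantum_channel E"
  shows "(\<forall>x y u v. E (ketbra x y) u v \<noteq> 0 \<longrightarrow> x = u \<and> y = v \<or> x = y \<and> u = v)
    \<longleftrightarrow> (\<exists>(p :: 'n \<Rightarrow> 'n \<Rightarrow> real) (Q :: 'n op).
          (\<forall>x y. p x y \<ge> 0) \<and> (\<forall>x. (\<Sum>y\<in>UNIV. p x y) = 1) \<and>
          psd Q \<and> (\<forall>x. Q x x = complex_of_real (p x x)) \<and>
          (\<forall>x y u v. E (ketbra x y) u v =
             (if x = y then if u = v then complex_of_real (p x u) else 0
              else if u = x \<and> v = y then Q x y else 0)))"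
    (is "?L \<longleftrightarrow> (\<exists>p Q. ?R p Q)")
proof
  assume support: "\<forall>x y u v. E (ketbra x y) u v \<noteq> 0 \<longrightarrow> x = u \<and> y = v \<or> x = y \<and> u = v"
  have choi: "psd_on UNIV (choi E)"
    using assms completely_positive_imp_psd_choi by (auto simp: quantum_channel_def psd_def)
  define p where "p x y = Re (E (ketbra x x) y y)" for x y
  define Q where "Q = (\<lambda>x y. E (ketbra x y) x y)"
  have "psd (\<lambda>y y'. choi E (x, y) (x, y'))" for x
    by (rule psd_on_reindex[OF choi]) (auto simp: inj_def)
  then have "psd (E (ketbra x x))" for x
    by (simp add: choi_apply)
  then have diag: "Im (E (ketbra x x) y y) = 0 \<and> 0 \<le> p x y" for x y
    unfolding p_def by (rule psd_diag)
  then have real: "E (ketbra x x) y y = complex_of_real (p x y)" for x y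
    by (simp add: p_def complex_eq_iff)
  have "psd (\<lambda>x y. choi E (x, x) (y, y))"
    by (rule psd_on_reindex[OF choi]) (auto simp: inj_def)
  then have "psd Q"
    by (simp add: Q_def choi_apply)
  moreover have "\<forall>x. (\<Sum>y\<in>UNIV. p x y) = 1"
  proof
    fix x
    have "(\<Sum>y\<in>UNIV. complex_of_real (p x y)) = trace_op (E (ketbra x x))"
      by (simp add: trace_op_def real)
    also have "\<dots> = 1"
      using assms by (simp add: quantum_channel_def trace_preserving_def trace_op_def ketbra_def)
    finally show "(\<Sum>y\<in>UNIV. p x y) = 1"
      by (metis of_real_eq_1_iff of_real_sum)
  qed
  moreover have "\<forall>x y u v. E (ketbra x y) u v =
      (if x = y then if u = v then complex_of_real (p x u) else 0
       else if u = x \<and> v = y then Q x y else 0)"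
    using support real unfolding Q_def by metis
  ultimately have "?R p Q"
    using diag real unfolding Q_def by blast
  then show "\<exists>p Q. ?R p Q"
    by blast
next
  assume "\<exists>p Q. ?R p Q"
  then show ?L
    by (elim exE conjE) simp
qed

theorem lemma4:
  fixes a :: "'n::finite \<Rightarrow> real" and E :: "'n op \<Rightarrow> 'n op"
  assumes "nondegenerate_bohr a"
    and "quantum_channel E"
  shows "time_translation_covariant a E \<longleftrightarrow>
    (\<exists>(p :: 'n \<Rightarrow> 'n \<Rightarrow> real) (Q :: 'n op).
       (\<forall>x y. p x y \<ge> 0) \<and> (\<forall>x. (\<Sum>y\<in>UNIV. p x y) = 1) \<and>
       psd Q \<and> (\<forall>x. Q x x = complex_of_real (p x x)) \<and>
       choi E = (\<Sum>x\<in>UNIV. \<Sum>y\<in>UNIV.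
                   smult_op (complex_of_real (p x y)) (kron (ketbra x x) (ketbra y y)))
              + (\<Sum>x\<in>UNIV. \<Sum>y\<in>UNIV - {x}.
                   smult_op (Q x y) (kron (ketbra x y) (ketbra x y))))"
proof -
  have lin: "linear_superop E"
    using assms(2) by (simp add: quantum_channel_def)
  have bohr: "a y - a x = a v - a u \<longleftrightarrow> x = u \<and> y = v \<or> x = y \<and> u = v" for x y u v
    using assms(1) unfolding nondegenerate_bohr_def by auto
  have "time_translation_covariant a E
      \<longleftrightarrow> (\<forall>x y u v. E (ketbra x y) u v \<noteq> 0 \<longrightarrow> x = u \<and> y = v \<or> x = y \<and> u = v)"
    unfolding time_translation_covariant_iff_selection_rule[OF lin] bohr by blast
  also note quantum_channel_support_iff_coefficients[OF assms(2)]
  finally show ?thesis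
    by (simp only: choi_eq_covariant_form_iff)
qed

end
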